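(* Under the assumptions in the context, the discrete solution set $\mathcal M^\delta:=\{u^\delta_\mu:\mu\in\mathcal P\}$ is a compact subset of $\widehat{\mathcal X^\delta}:=(B^1)^*(\mathcal Y^\delta)+\dots+(B^{Q_b})^*(\mathcal Y^\delta)\subset L_2(\Omega)$, where $u_\mu^\delta\in\mathcal X_\mu^\delta:=B_\mu^*(\mathcal Y^\delta)$ is the unique solution of $(u^\delta_\mu,B_\mu^*v)_{L_2(\Omega)}=f_\mu(v)$ for all $v\in\mathcal Y^\delta$.
   Context: Let $\Omega\subset\mathbb R^n$ be a bounded polyhedral Lipschitz domain with outward normal $\vec n$, and $\mathcal P\subset\mathbb R^p$ compact. For each $\mu\in\mathcal P$ let $\vec b_\mu\in C^1(\bar\Omega)^n$, $c_\mu\in C^0(\bar\Omega)$ with $c_\mu-\tfrac12\nabla\cdot\vec b_\mu\ge0$, with $\mu$-independent $\Gamma_\pm=\{z\in\partial\Omega:\vec b_\mu\cdot\vec n\gtrless0\}$, and such that $B_{\mu;\circ}^*w:=-\vec b_\mu\cdot\nabla w+w(c_\mu-\nabla\cdot\vec b_\mu)$ on $C^1_{\Gamma_+}(\Omega):=\{v\in C^0(\bar\Omega)\cap C^1(\Omega):v|_{\Gamma_+}=0\}$ is injective with dense range in $L_2(\Omega)$. Let $\mathcal Y_\mu$ be the closure of $C^1_{\Gamma_+}(\Omega)$ under $\|v\|_{\mathcal Y_\mu}:=\|B^*_{\mu;\circ}v\|_{L_2(\Omega)}$, $B_\mu^*$ the continuous extension, $\bar{\mathcal Y}:=\bigcap_\mu\mathcal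 Y_\mu$ (dense in each $\mathcal Y_\mu$) with norm $\|v\|_{\bar{\mathcal Y}}:=\sup_\mu\|v\|_{\mathcal Y_\mu}$. Assume affine decompositions $B_\mu^*=\sum_{q=1}^{Q_b}\theta_b^q(\mu)(B^q)^*$, $f_\mu=\sum_{q=1}^{Q_f}\theta_f^q(\mu)f^q$ with $\theta^q_b,\theta^q_f\in C^0(\mathcal P)$, $(B^q)^*\in\mathcal L(\bar{\mathcal Y},L_2(\Omega))$, $f^q\in\bar{\mathcal Y}'$, and $f_\mu\in\mathcal Y_\mu'$ for all $\mu$ with $\sup_\mu\|f_\mu\|_{\mathcal Y_\mu'}<\infty$. Let $\mathcal Y^\delta\subset\bar{\mathcal Y}$ be a $\mu$-independent finite-dimensional subspace; $\widehat{\mathcal X^\delta}$ is equipped with the $L_2(\Omega)$ inner product. *)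

theory Defs
  imports "HOL-Analysis.Analysis"
begin

text \<open>Abstract rendering of the setting: the type 'h plays the role of L2(Omega)
(a real Hilbert space), the type 'y plays the role of Ybar (with its own norm),
Bq q plays the role of the adjoint operator (B^q)^*, fq q the functional f^q.\<close>

definition affine_op ::
  "(nat \<Rightarrow> 'p \<Rightarrow> real) \<Rightarrow> (nat \<Rightarrow> 'y \<Rightarrow> 'h::real_vector) \<Rightarrow> nat \<Rightarrow> 'p \<Rightarrow> 'y \<Rightarrow> 'h" where
  "affine_op \<theta> B Q \<mu> v = (\<Sum>q\<in>{1..Q}. \<theta> q \<mu> *\<^sub>R B q v)"

definition affine_fun ::
  "(nat \<Rightarrow> 'p \<Rightarrow> real) \<Rightarrow> (nat \<Rightarrow> 'y \<Rightarrow> real) \<Rightarrow> nat \<Rightarrow> 'p \<Rightarrow> 'y \<Rightarrow> real" where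
  "affine_fun \<theta> f Q \<mu> v = (\<Sum>q\<in>{1..Q}. \<theta> q \<mu> * f q v)"

definition Xhat :: "(nat \<Rightarrow> 'y \<Rightarrow> 'h::real_vector) \<Rightarrow> nat \<Rightarrow> 'y set \<Rightarrow> 'h set" where
  "Xhat B Q Yd = {\<Sum>q\<in>{1..Q}. B q (v q) | v. \<forall>q\<in>{1..Q}. v q \<in> Yd}"

definition is_galerkin_sol ::
  "('y \<Rightarrow> 'h::real_inner) \<Rightarrow> ('y \<Rightarrow> real) \<Rightarrow> 'y set \<Rightarrow> 'h \<Rightarrow> bool" where
  "is_galerkin_sol Bmu fmu Yd u \<longleftrightarrow> u \<in> Bmu ` Yd \<and> (\<forall>v\<in>Yd. inner u (Bmu v) = fmu v)"

definition galerkin_sol :: "('y \<Rightarrow> 'h::real_inner) \<Rightarrow> ('y \<Rightarrow> real) \<Rightarrow> 'y set \<Rightarrow> 'h" where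
  "galerkin_sol Bmu fmu Yd = (THE u. is_galerkin_sol Bmu fmu Yd u)"

end

theory Submission
  imports Defs
begin

text \<open>Restricted to the finite-dimensional space \<open>Yd\<close>, the operators \<open>B\<^sub>\<mu>\<close> are injective and
depend continuously on \<open>\<mu>\<close>, so by compactness of \<open>P \<times> (Yd \<inter> sphere 0 1)\<close> they are bounded below
uniformly in \<open>\<mu>\<close>. Together with the uniform bound on \<open>f\<^sub>\<mu>\<close> this bounds the coefficient \<open>v\<close> of every
Galerkin solution \<open>u\<^sub>\<mu> = B\<^sub>\<mu> v\<close>, and the pairs \<open>(\<mu>, v)\<close> satisfying the Galerkin equations form a
closed set. The solution set is therefore the continuous image of a compact set. It lies in \<open>Xhat\<close>
because \<open>B\<^sub>\<mu> v = \<Sum>\<^sub>q (B\<^sup>q)\<^sup>* (\<theta>\<^sup>q(\<mu>) v)\<close>.\<close>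

lemma scaleR_coeff_le_norm_off_closed_span:
  fixes a :: "'a::real_normed_vector"
  assumes "closed (span S)" "a \<notin> span S"
  obtains e where "e > 0" "\<And>y t. y \<in> span S \<Longrightarrow> \<bar>t\<bar> * e \<le> norm (y + t *\<^sub>R a)"
proof
  define e where "e = infdist a (span S)"
  show "e > 0"
    unfolding e_def using assms span_zero by (intro infdist_pos_not_in_closed) auto
  show "\<bar>t\<bar> * e \<le> norm (y + t *\<^sub>R a)" if y: "y \<in> span S" for y t
  proof (cases "t = 0")
    case False
    have "e \<le> dist a (- (1 / t) *\<^sub>R y)"
      unfolding e_def using y by (intro infdist_le) (simp add: span_scale span_neg)
    also have "\<dots> = norm ((1 / t) *\<^sub>R (y + t *\<^sub>R a))"
      using False by (simp add: dist_norm algebra_simps)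
    also have "\<dots> = norm (y + t *\<^sub>R a) / \<bar>t\<bar>"
      by simp
    finally show ?thesis
      using False by (simp add: field_simps)
  qed simp
qed

lemma bounded_components_off_closed_span:
  fixes a :: "'a::real_normed_vector"
  assumes "closed (span S)" "a \<notin> span S" "\<And>n. y n \<in> span S"
    and "bounded (range (\<lambda>n. y n + t n *\<^sub>R a))"
  shows "bounded (range t)" "bounded (range y)"
proof -
  obtain e where e: "e > 0" "\<And>y t. y \<in> span S \<Longrightarrow> \<bar>t\<bar> * e \<le> norm (y + t *\<^sub>R a)"
    using scaleR_coeff_le_norm_off_closed_span[OF assms(1,2)] by blast
  obtain M where M: "\<And>n. norm (y n + t n *\<^sub>R a) \<le> M" using assms(4) by (auto simp: bounded_iff)
  have t_bound: "\<bar>t n\<bar> \<le> M / e" for n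
  proof -
    have "\<bar>t n\<bar> * e \<le> M" using e(2)[OF assms(3)[of n], of "t n"] M[of n] by simp
    then show ?thesis using e(1) by (simp add: field_simps)
  qed
  then show "bounded (range t)" by (auto simp: bounded_iff)
  have "norm (y n) \<le> M + M / e * norm a" for n
  proof -
    have "norm (y n) \<le> norm (y n + t n *\<^sub>R a) + \<bar>t n\<bar> * norm a"
      using norm_triangle_ineq4[of "y n + t n *\<^sub>R a" "t n *\<^sub>R a"] by simp
    also have "\<dots> \<le> M + M / e * norm a"
      using M[of n] mult_right_mono[OF t_bound norm_ge_zero] by (intro add_mono)
    finally show ?thesis .
  qed
  then show "bounded (range y)" by (auto simp: bounded_iff)
qed

lemma closed_if_bounded_seqs_have_convergent_subseqs:
  fixes A :: "'a::metric_space set"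
  assumes "\<And>x :: nat \<Rightarrow> 'a. (\<And>n. x n \<in> A) \<Longrightarrow> bounded (range x) \<Longrightarrow> \<exists>l\<in>A. \<exists>r. strict_mono r \<and> (x \<circ> r) \<longlonglongrightarrow> l"
  shows "closed A"
  unfolding closed_sequential_limits
proof (intro allI impI)
  fix x l assume x: "(\<forall>n. x n \<in> A) \<and> x \<longlonglongrightarrow> l"
  then have "bounded (range x)" "\<And>n. x n \<in> A" using convergent_imp_bounded by blast+
  then obtain l' r where "l' \<in> A" "strict_mono r" "(x \<circ> r) \<longlonglongrightarrow> l'"
    using assms[of x] by blast
  moreover have "(x \<circ> r) \<longlonglongrightarrow> l" using x \<open>strict_mono r\<close> by (intro LIMSEQ_subseq_LIMSEQ) auto
  ultimately show "l \<in> A" using LIMSEQ_unique by metis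
qed

lemma bounded_seq_in_finite_span_has_convergent_subseq:
  fixes x :: "nat \<Rightarrow> 'a::real_normed_vector"
  assumes "finite S" "\<And>n. x n \<in> span S" "bounded (range x)"
  shows "\<exists>l\<in>span S. \<exists>r. strict_mono r \<and> (x \<circ> r) \<longlonglongrightarrow> l"
  using assms
proof (induction S arbitrary: x rule: finite_induct)
  case empty
  then have "x \<circ> id = (\<lambda>n. 0)" by auto
  then show ?case using strict_mono_id span_zero by fastforce
next
  case (insert a S)
  show ?case
  proof (cases "a \<in> span S")
    case True
    then show ?thesis using insert by (simp add: span_redundant)
  next
    case False
    have closed: "closed (span S)"
      using insert.IH by (rule closed_if_bounded_seqs_have_convergent_subseqs)
    have "\<forall>n. \<exists>k. x n - k *\<^sub>R a \<in> span S"
      using insert.prems(1) span_breakdown_eq by blast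
    then obtain t where t: "\<And>n. x n - t n *\<^sub>R a \<in> span S" by metis
    define y where "y n = x n - t n *\<^sub>R a" for n
    have y: "y n \<in> span S" and xy: "x n = y n + t n *\<^sub>R a" for n
      using t by (simp_all add: y_def)
    have "bounded (range (\<lambda>n. y n + t n *\<^sub>R a))" using insert.prems(2) by (simp flip: xy)
    with closed False y have "bounded (range t)" "bounded (range y)"
      by (rule bounded_components_off_closed_span)+
    obtain lt r1 where r1: "strict_mono r1" "(t \<circ> r1) \<longlonglongrightarrow> lt"
      using bounded_imp_convergent_subsequence[OF \<open>bounded (range t)\<close>] by blast
    have "bounded (range (y \<circ> r1))" using \<open>bounded (range y)\<close> by (rule bounded_subset) auto
    then obtain ly r2 where r2: "ly \<in> span S" "strict_mono r2" "(y \<circ> r1 \<circ> r2) \<longlonglongrightarrow> ly"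
      using insert.IH y by (metis comp_apply)
    have "(t \<circ> r1 \<circ> r2) \<longlonglongrightarrow> lt" using r1 r2 LIMSEQ_subseq_LIMSEQ by blast
    then have "(x \<circ> (r1 \<circ> r2)) \<longlonglongrightarrow> ly + lt *\<^sub>R a"
      using r2(3) tendsto_add[OF r2(3) tendsto_scaleR] by (simp add: xy o_def)
    moreover have "ly + lt *\<^sub>R a \<in> span (insert a S)"
      using r2(1) by (meson span_add span_base span_mono span_scale insertI1 subset_insertI subsetD)
    ultimately show ?thesis using strict_mono_o[OF r1(1) r2(2)] by blast
  qed
qed

lemma closed_finite_span:
  fixes S :: "'a::real_normed_vector set"
  assumes "finite S"
  shows "closed (span S)"
  using bounded_seq_in_finite_span_has_convergent_subseq[OF assms]
  by (rule closed_if_bounded_seqs_have_convergent_subseqs)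

lemma compact_in_finite_span:
  fixes T :: "'a::real_normed_vector set"
  assumes "finite S" "T \<subseteq> span S" "bounded T" "closed T"
  shows "compact T"
  unfolding compact_eq_seq_compact_metric
proof (rule seq_compactI)
  fix x :: "nat \<Rightarrow> 'a" assume x: "\<forall>n. x n \<in> T"
  then obtain l and r :: "nat \<Rightarrow> nat" where "strict_mono r" "(x \<circ> r) \<longlonglongrightarrow> l"
    using bounded_seq_in_finite_span_has_convergent_subseq[OF assms(1), of x] assms(2,3)
      bounded_subset[of T "range x"] by blast
  moreover have "l \<in> T"
    using assms(4) x calculation unfolding closed_sequential_limits by (metis comp_apply)
  ultimately show "\<exists>l\<in>T. \<exists>r. strict_mono r \<and> (x \<circ> r) \<longlonglongrightarrow> l" by blast
qed

lemma galerkin_exists_unique: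
  fixes Bm :: "'y::real_vector \<Rightarrow> 'h::real_inner" and fm :: "'y \<Rightarrow> real"
  assumes lB: "linear Bm" and lf: "linear fm" and iB: "inj Bm"
    and E: "finite E" "span E = Yd"
  shows "\<exists>!u. is_galerkin_sol Bm fm Yd u"
proof -
  \<comment> \<open>\<open>u\<close> is the Riesz representative of \<open>fm \<circ> Bm\<^sup>-\<^sup>1\<close> on \<open>Bm ` Yd\<close>, expanded in an orthogonal basis.\<close>
  have X: "Bm ` Yd = span (Bm ` E)" using E(2) span_linear_image[OF lB] by metis
  obtain C where C: "finite C" "span C = span (Bm ` E)" "pairwise orthogonal C"
    using basis_orthogonal[of "Bm ` E"] E(1) by blast
  have "\<forall>c\<in>C. \<exists>y\<in>Yd. Bm y = c"
    using C(2) X span_base by (metis image_iff)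
  then obtain yc where yc: "\<And>c. c \<in> C \<Longrightarrow> yc c \<in> Yd \<and> Bm (yc c) = c" by metis
  define u where "u = (\<Sum>c\<in>C. (fm (yc c) / (c \<bullet> c)) *\<^sub>R c)"
  have uX: "u \<in> Bm ` Yd" unfolding u_def X C(2)[symmetric]
    by (intro span_sum span_scale span_base)
  have uc: "u \<bullet> c = fm (yc c)" if c: "c \<in> C" for c
  proof (cases "c = 0")
    case True
    then have "yc c = 0" using yc[OF c] iB linear_0[OF lB] by (metis injD)
    then show ?thesis using True linear_0[OF lf] by simp
  next
    case False
    have "\<And>c'. c' \<in> C - {c} \<Longrightarrow> c' \<bullet> c = 0"
      using C(3) c by (auto simp: pairwise_def orthogonal_def)
    then have "u \<bullet> c = (fm (yc c) / (c \<bullet> c)) * (c \<bullet> c)"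
      unfolding u_def inner_sum_left inner_scaleR_left by (subst sum.remove[OF C(1) c]) simp
    then show ?thesis using False by simp
  qed
  have sol: "is_galerkin_sol Bm fm Yd u"
    unfolding is_galerkin_sol_def
  proof (intro conjI ballI uX)
    fix v assume "v \<in> Yd"
    then have "Bm v \<in> span C" using X C(2) by blast
    then obtain a where a: "Bm v = (\<Sum>c\<in>C. a c *\<^sub>R c)" using span_finite[OF C(1)] by blast
    have "Bm v = Bm (\<Sum>c\<in>C. a c *\<^sub>R yc c)"
      unfolding a linear_sum[OF lB] linear_scale[OF lB] using yc by (intro sum.cong) auto
    then have v: "v = (\<Sum>c\<in>C. a c *\<^sub>R yc c)" using iB by (simp add: inj_eq)
    have "u \<bullet> Bm v = (\<Sum>c\<in>C. a c * fm (yc c))" unfolding a using uc by (simp add: inner_sum_right)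
    also have "\<dots> = fm v" unfolding v linear_sum[OF lf] linear_scale[OF lf] by simp
    finally show "u \<bullet> Bm v = fm v" .
  qed
  moreover have "w = u" if w: "is_galerkin_sol Bm fm Yd w" for w
  proof -
    obtain a b where ab: "a \<in> Yd" "b \<in> Yd" "w = Bm a" "u = Bm b"
      using w sol unfolding is_galerkin_sol_def by blast
    have "a - b \<in> Yd" using ab E(2) span_diff by blast
    then have "w \<bullet> Bm (a - b) = u \<bullet> Bm (a - b)"
      using w sol unfolding is_galerkin_sol_def by simp
    then have "(w - u) \<bullet> (w - u) = 0"
      using ab linear_diff[OF lB] by (simp add: inner_diff_left)
    then show ?thesis by simp
  qed
  ultimately show ?thesis by blast
qed

lemma galerkin_sol_norm_le:
  fixes Bm :: "'y \<Rightarrow> 'h::real_inner"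
  assumes u: "is_galerkin_sol Bm fm Yd u"
    and f_le: "\<And>v. v \<in> Yd \<Longrightarrow> \<bar>fm v\<bar> \<le> C * norm (Bm v)"
  shows "norm u \<le> \<bar>C\<bar>"
proof -
  obtain v where v: "v \<in> Yd" "u = Bm v" using u unfolding is_galerkin_sol_def by blast
  have "norm u ^ 2 = fm v" using u v unfolding is_galerkin_sol_def by (simp add: power2_norm_eq_inner)
  also have "\<dots> \<le> C * norm u" using f_le[OF v(1)] v(2) by simp
  also have "\<dots> \<le> \<bar>C\<bar> * norm u" by (simp add: mult_right_mono)
  finally show ?thesis by (cases "norm u = 0") (auto simp: power2_eq_square)
qed

lemma closed_galerkin_pairs:
  fixes B :: "'p::topological_space \<Rightarrow> 'y::real_normed_vector \<Rightarrow> 'h::real_inner"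
  assumes "closed P" "closed Yd"
    and B_cont: "continuous_on (P \<times> UNIV) (\<lambda>z. B (fst z) (snd z))"
    and F_cont: "continuous_on (P \<times> UNIV) (\<lambda>z. F (fst z) (snd z))"
  shows "closed {(\<mu>, v) \<in> P \<times> Yd. is_galerkin_sol (B \<mu>) (F \<mu>) Yd (B \<mu> v)}"
proof -
  have closed_eq: "closed {z \<in> P \<times> UNIV. B (fst z) (snd z) \<bullet> B (fst z) w - F (fst z) w = 0}" for w
  proof (rule continuous_closed_preimage_constant)
    show "closed (P \<times> (UNIV :: 'y set))" using \<open>closed P\<close> by (simp add: closed_Times)
    have slice: "continuous_on (P \<times> UNIV) (\<lambda>z. (fst z, w))" "(\<lambda>z. (fst z, w)) ` (P \<times> UNIV) \<subseteq> P \<times> UNIV"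
      by (intro continuous_intros) auto
    have "continuous_on (P \<times> UNIV) ((\<lambda>z. B (fst z) (snd z)) \<circ> (\<lambda>z. (fst z, w)))"
      "continuous_on (P \<times> UNIV) ((\<lambda>z. F (fst z) (snd z)) \<circ> (\<lambda>z. (fst z, w)))"
      by (rule continuous_on_compose[OF slice(1) continuous_on_subset[OF _ slice(2)]]; fact)+
    then show "continuous_on (P \<times> UNIV) (\<lambda>z. B (fst z) (snd z) \<bullet> B (fst z) w - F (fst z) w)"
      using B_cont by (intro continuous_intros) (simp_all add: o_def)
  qed
  have "{(\<mu>, v) \<in> P \<times> Yd. is_galerkin_sol (B \<mu>) (F \<mu>) Yd (B \<mu> v)} = (P \<times> Yd) \<inter>
      (\<Inter>w\<in>Yd. {z \<in> P \<times> UNIV. B (fst z) (snd z) \<bullet> B (fst z) w - F (fst z) w = 0})"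
    unfolding is_galerkin_sol_def by auto
  then show ?thesis
    using assms(1,2) closed_eq by (simp add: closed_Int closed_Times closed_INT)
qed

lemma uniform_norm_lower_bound_on_compact:
  fixes B :: "'p::topological_space \<Rightarrow> 'y::real_normed_vector \<Rightarrow> 'h::real_normed_vector"
  assumes "compact P" "compact (Y \<inter> sphere 0 1)" "subspace Y"
    and cont: "continuous_on (P \<times> Y) (\<lambda>z. B (fst z) (snd z))"
    and lin: "\<And>\<mu>. \<mu> \<in> P \<Longrightarrow> linear (B \<mu>)" and inj: "\<And>\<mu>. \<mu> \<in> P \<Longrightarrow> inj_on (B \<mu>) Y"
  obtains m where "m > 0" "\<And>\<mu> v. \<mu> \<in> P \<Longrightarrow> v \<in> Y \<Longrightarrow> m * norm v \<le> norm (B \<mu> v)"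
proof -
  define K where "K = P \<times> (Y \<inter> sphere 0 1)"
  have normalized_in_K: "(\<mu>, v /\<^sub>R norm v) \<in> K" if "\<mu> \<in> P" "v \<in> Y" "v \<noteq> 0" for \<mu> v
    using that \<open>subspace Y\<close> by (simp add: K_def subspace_scale)
  have scale: "norm (B \<mu> (v /\<^sub>R norm v)) = norm (B \<mu> v) / norm v" if "\<mu> \<in> P" for \<mu> v
    using linear_scale[OF lin[OF that]] by (simp add: divide_inverse mult.commute)
  show thesis
  proof (cases "K = {}")
    case True
    have zero: "v = 0" if "\<mu> \<in> P" "v \<in> Y" for \<mu> v
      using normalized_in_K[OF that] True by blast
    show thesis
    proof (rule that[of 1])
      show "1 * norm v \<le> norm (B \<mu> v)" if "\<mu> \<in> P" "v \<in> Y" for \<mu> v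
        using zero[OF that] by simp
    qed simp
  next
    case False
    have "compact K" unfolding K_def using assms(1,2) by (rule compact_Times)
    moreover have "continuous_on K (\<lambda>z. norm (B (fst z) (snd z)))"
      using cont by (rule continuous_on_norm[OF continuous_on_subset]) (auto simp: K_def)
    ultimately obtain z0 where "z0 \<in> K"
      "\<And>z. z \<in> K \<Longrightarrow> norm (B (fst z0) (snd z0)) \<le> norm (B (fst z) (snd z))"
      using continuous_attains_inf[OF _ False] by blast
    moreover obtain \<mu>0 w0 where z0: "z0 = (\<mu>0, w0)" by (rule prod.exhaust)
    ultimately have min: "(\<mu>0, w0) \<in> K"
      "\<And>z. z \<in> K \<Longrightarrow> norm (B \<mu>0 w0) \<le> norm (B (fst z) (snd z))"
      by simp_all
    then have "\<mu>0 \<in> P" "w0 \<in> Y" "w0 \<noteq> 0" by (auto simp: K_def)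
    then have "B \<mu>0 w0 \<noteq> B \<mu>0 0"
      using inj_onD[OF inj] subspace_0[OF \<open>subspace Y\<close>] by metis
    then have pos: "norm (B \<mu>0 w0) > 0" using linear_0[OF lin[OF \<open>\<mu>0 \<in> P\<close>]] by simp
    have "norm (B \<mu>0 w0) * norm v \<le> norm (B \<mu> v)" if "\<mu> \<in> P" "v \<in> Y" for \<mu> v
    proof (cases "v = 0")
      case False
      then show ?thesis
        using min(2)[OF normalized_in_K[OF that False]] scale[OF that(1)] by (simp add: field_simps)
    qed simp
    with pos show thesis by (rule that)
  qed
qed

theorem compact_galerkin_solutions:
  fixes B :: "'p::metric_space \<Rightarrow> 'y::real_normed_vector \<Rightarrow> 'h::real_inner"
    and F :: "'p \<Rightarrow> 'y \<Rightarrow> real"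
  assumes "compact P" "finite E" and Yd: "span E = Yd"
    and B_cont: "continuous_on (P \<times> UNIV) (\<lambda>z. B (fst z) (snd z))"
    and F_cont: "continuous_on (P \<times> UNIV) (\<lambda>z. F (fst z) (snd z))"
    and lin: "\<And>\<mu>. linear (B \<mu>)" "\<And>\<mu>. linear (F \<mu>)"
    and inj: "\<And>\<mu>. \<mu> \<in> P \<Longrightarrow> inj (B \<mu>)"
    and F_le: "\<And>\<mu> v. \<mu> \<in> P \<Longrightarrow> \<bar>F \<mu> v\<bar> \<le> C * norm (B \<mu> v)"
  shows "compact ((\<lambda>\<mu>. galerkin_sol (B \<mu>) (F \<mu>) Yd) ` P)"
proof -
  have sol_unique: "is_galerkin_sol (B \<mu>) (F \<mu>) Yd u \<longleftrightarrow> u = galerkin_sol (B \<mu>) (F \<mu>) Yd"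
    if "\<mu> \<in> P" for \<mu> u
    using galerkin_exists_unique[OF lin inj[OF that] \<open>finite E\<close> Yd]
    unfolding galerkin_sol_def by (metis theI')
  have "subspace Yd" "closed Yd" using Yd closed_finite_span[OF \<open>finite E\<close>] by auto
  \<comment> \<open>The library proves spheres closed and bounded only in \<open>heine_borel\<close> spaces.\<close>
  have "sphere (0::'y) 1 = cball 0 1 - ball 0 1" by auto
  then have "compact (Yd \<inter> sphere 0 1)"
    using \<open>finite E\<close> Yd \<open>closed Yd\<close> by (intro compact_in_finite_span closed_Int bounded_Int disjI2) auto
  moreover have "continuous_on (P \<times> Yd) (\<lambda>z. B (fst z) (snd z))"
    using B_cont by (rule continuous_on_subset) auto
  moreover have "inj_on (B \<mu>) Yd" if "\<mu> \<in> P" for \<mu>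
    using inj[OF that] by (rule inj_on_subset) simp
  ultimately obtain m where m: "m > 0" "\<And>\<mu> v. \<mu> \<in> P \<Longrightarrow> v \<in> Yd \<Longrightarrow> m * norm v \<le> norm (B \<mu> v)"
    using uniform_norm_lower_bound_on_compact[OF \<open>compact P\<close> _ \<open>subspace Yd\<close>, of B] lin(1) by blast
  define G where "G = {(\<mu>, v) \<in> P \<times> Yd. is_galerkin_sol (B \<mu>) (F \<mu>) Yd (B \<mu> v)}"
  have "G \<subseteq> P \<times> (Yd \<inter> cball 0 (\<bar>C\<bar> / m))"
  proof (safe, unfold G_def mem_Collect_eq case_prod_conv)
    fix \<mu> v assume \<mu>v: "(\<mu>, v) \<in> P \<times> Yd \<and> is_galerkin_sol (B \<mu>) (F \<mu>) Yd (B \<mu> v)"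
    then have "norm (B \<mu> v) \<le> \<bar>C\<bar>" using galerkin_sol_norm_le[of "B \<mu>" "F \<mu>" Yd _ C] F_le by auto
    then have "m * norm v \<le> \<bar>C\<bar>" using m(2)[of \<mu> v] \<mu>v by auto
    then show "v \<in> cball 0 (\<bar>C\<bar> / m)" using m(1) by (simp add: field_simps)
  qed (auto simp: G_def)
  moreover have "compact (Yd \<inter> cball 0 (\<bar>C\<bar> / m))"
    using \<open>finite E\<close> Yd \<open>closed Yd\<close> by (intro compact_in_finite_span closed_Int) auto
  moreover have "closed G"
    unfolding G_def using \<open>compact P\<close> \<open>closed Yd\<close> B_cont F_cont
    by (intro closed_galerkin_pairs compact_imp_closed[OF \<open>compact P\<close>])
  ultimately have "compact G"
    using compact_Int_closed[OF compact_Times[OF \<open>compact P\<close>]] by (metis inf.absorb2)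
  moreover have "(\<lambda>\<mu>. galerkin_sol (B \<mu>) (F \<mu>) Yd) ` P = (\<lambda>z. B (fst z) (snd z)) ` G"
  proof (intro equalityI subsetI)
    fix u assume "u \<in> (\<lambda>\<mu>. galerkin_sol (B \<mu>) (F \<mu>) Yd) ` P"
    then obtain \<mu> where "\<mu> \<in> P" "is_galerkin_sol (B \<mu>) (F \<mu>) Yd u" using sol_unique by blast
    moreover from this(2) obtain v where "v \<in> Yd" "u = B \<mu> v" unfolding is_galerkin_sol_def by blast
    ultimately show "u \<in> (\<lambda>z. B (fst z) (snd z)) ` G" unfolding G_def by force
  next
    fix u assume "u \<in> (\<lambda>z. B (fst z) (snd z)) ` G"
    then obtain \<mu> where "\<mu> \<in> P" "is_galerkin_sol (B \<mu>) (F \<mu>) Yd u" unfolding G_def by auto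
    then show "u \<in> (\<lambda>\<mu>. galerkin_sol (B \<mu>) (F \<mu>) Yd) ` P" using sol_unique by blast
  qed
  moreover have "continuous_on G (\<lambda>z. B (fst z) (snd z))"
    using B_cont by (rule continuous_on_subset) (auto simp: G_def)
  ultimately show ?thesis by (simp add: compact_continuous_image)
qed

lemma bounded_linear_affine_op:
  assumes "\<And>q. q \<in> {1..Q} \<Longrightarrow> bounded_linear (B q)"
  shows "bounded_linear (affine_op \<theta> B Q \<mu>)"
  unfolding affine_op_def using assms
  by (intro bounded_linear_sum bounded_linear_compose[OF bounded_linear_scaleR_right])

lemma bounded_linear_affine_fun:
  assumes "\<And>q. q \<in> {1..Q} \<Longrightarrow> bounded_linear (f q)"
  shows "bounded_linear (affine_fun \<theta> f Q \<mu>)"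
  unfolding affine_fun_def using assms
  by (intro bounded_linear_sum bounded_linear_const_mult)

lemma continuous_on_affine_op:
  fixes B :: "nat \<Rightarrow> 'y::real_normed_vector \<Rightarrow> 'h::real_normed_vector"
  assumes "\<And>q. q \<in> {1..Q} \<Longrightarrow> continuous_on P (\<theta> q)" "\<And>q. q \<in> {1..Q} \<Longrightarrow> bounded_linear (B q)"
  shows "continuous_on (P \<times> UNIV) (\<lambda>z. affine_op \<theta> B Q (fst z) (snd z))"
  unfolding affine_op_def
proof (intro continuous_on_sum continuous_on_scaleR)
  fix q assume q: "q \<in> {1..Q}"
  show "continuous_on (P \<times> UNIV) (\<lambda>z. \<theta> q (fst z))"
    by (rule continuous_on_compose2[of P "\<theta> q" _ fst]) (auto intro: assms(1)[OF q] continuous_on_fst continuous_on_id)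
  show "continuous_on (P \<times> UNIV) (\<lambda>z. B q (snd z))"
    by (rule continuous_on_compose2[of UNIV _ _ snd])
      (auto intro: linear_continuous_on assms(2)[OF q] continuous_on_snd continuous_on_id)
qed

lemma continuous_on_affine_fun:
  assumes "\<And>q. q \<in> {1..Q} \<Longrightarrow> continuous_on P (\<theta> q)" "\<And>q. q \<in> {1..Q} \<Longrightarrow> bounded_linear (f q)"
  shows "continuous_on (P \<times> UNIV) (\<lambda>z. affine_fun \<theta> f Q (fst z) (snd z))"
  unfolding affine_fun_def
proof (intro continuous_on_sum continuous_on_mult)
  fix q assume q: "q \<in> {1..Q}"
  show "continuous_on (P \<times> UNIV) (\<lambda>z. \<theta> q (fst z))"
    by (rule continuous_on_compose2[of P "\<theta> q" _ fst]) (auto intro: assms(1)[OF q] continuous_on_fst continuous_on_id)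
  show "continuous_on (P \<times> UNIV) (\<lambda>z. f q (snd z))"
    by (rule continuous_on_compose2[of UNIV _ _ snd])
      (auto intro: linear_continuous_on assms(2)[OF q] continuous_on_snd continuous_on_id)
qed

lemma affine_op_mem_Xhat:
  assumes "\<And>q. q \<in> {1..Q} \<Longrightarrow> linear (B q)" "subspace Yd" "v \<in> Yd"
  shows "affine_op \<theta> B Q \<mu> v \<in> Xhat B Q Yd"
proof -
  have "affine_op \<theta> B Q \<mu> v = (\<Sum>q\<in>{1..Q}. B q (\<theta> q \<mu> *\<^sub>R v))"
    unfolding affine_op_def using assms(1) by (intro sum.cong) (simp_all add: linear_scale)
  moreover have "\<forall>q\<in>{1..Q}. \<theta> q \<mu> *\<^sub>R v \<in> Yd" using assms(2,3) by (simp add: subspace_scale)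
  ultimately show ?thesis unfolding Xhat_def by (intro CollectI exI[of _ "\<lambda>q. \<theta> q \<mu> *\<^sub>R v"]) simp
qed

theorem corollary4p5:
  fixes P :: "'p::euclidean_space set"
    and \<theta>b \<theta>f :: "nat \<Rightarrow> 'p \<Rightarrow> real"
    and Bq :: "nat \<Rightarrow> 'y::real_normed_vector \<Rightarrow> 'h::{real_inner, complete_space}"
    and fq :: "nat \<Rightarrow> 'y \<Rightarrow> real"
    and Yd :: "'y set"
    and Qb Qf :: nat
  assumes P_compact: "compact P"
    and theta_b_cont: "\<forall>q\<in>{1..Qb}. continuous_on P (\<theta>b q)"
    and theta_f_cont: "\<forall>q\<in>{1..Qf}. continuous_on P (\<theta>f q)"
    and Bq_bounded: "\<forall>q\<in>{1..Qb}. bounded_linear (Bq q)"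
    and fq_bounded: "\<forall>q\<in>{1..Qf}. bounded_linear (fq q)"
    and Ybar_norm: "\<forall>v. norm v = (SUP \<mu>\<in>P. norm (affine_op \<theta>b Bq Qb \<mu> v))"
    and B_inj: "\<forall>\<mu>\<in>P. inj (affine_op \<theta>b Bq Qb \<mu>)"
    and f_bound: "\<exists>C. \<forall>\<mu>\<in>P. \<forall>v. \<bar>affine_fun \<theta>f fq Qf \<mu> v\<bar> \<le> C * norm (affine_op \<theta>b Bq Qb \<mu> v)"
    and Yd_subspace: "subspace Yd"
    and Yd_findim: "\<exists>B. finite B \<and> span B = Yd"
  shows "(\<forall>\<mu>\<in>P. \<exists>!u. is_galerkin_sol (affine_op \<theta>b Bq Qb \<mu>) (affine_fun \<theta>f fq Qf \<mu>) Yd u)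
       \<and> compact ((\<lambda>\<mu>. galerkin_sol (affine_op \<theta>b Bq Qb \<mu>) (affine_fun \<theta>f fq Qf \<mu>) Yd) ` P)
       \<and> (\<lambda>\<mu>. galerkin_sol (affine_op \<theta>b Bq Qb \<mu>) (affine_fun \<theta>f fq Qf \<mu>) Yd) ` P \<subseteq> Xhat Bq Qb Yd"
proof -
  obtain E where E: "finite E" "span E = Yd" using Yd_findim by blast
  obtain C where C: "\<And>\<mu> v. \<mu> \<in> P \<Longrightarrow> \<bar>affine_fun \<theta>f fq Qf \<mu> v\<bar> \<le> C * norm (affine_op \<theta>b Bq Qb \<mu> v)"
    using f_bound by blast
  have lin: "linear (affine_op \<theta>b Bq Qb \<mu>)" "linear (affine_fun \<theta>f fq Qf \<mu>)" for \<mu>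
    using Bq_bounded fq_bounded
    by (auto intro!: bounded_linear.linear bounded_linear_affine_op bounded_linear_affine_fun)
  have unique: "\<exists>!u. is_galerkin_sol (affine_op \<theta>b Bq Qb \<mu>) (affine_fun \<theta>f fq Qf \<mu>) Yd u" if "\<mu> \<in> P" for \<mu>
    using B_inj that by (intro galerkin_exists_unique[OF lin _ E]) blast
  have "compact ((\<lambda>\<mu>. galerkin_sol (affine_op \<theta>b Bq Qb \<mu>) (affine_fun \<theta>f fq Qf \<mu>) Yd) ` P)"
    using P_compact E theta_b_cont theta_f_cont Bq_bounded fq_bounded B_inj C lin
    by (intro compact_galerkin_solutions continuous_on_affine_op continuous_on_affine_fun) auto
  moreover have "galerkin_sol (affine_op \<theta>b Bq Qb \<mu>) (affine_fun \<theta>f fq Qf \<mu>) Yd \<in> Xhat Bq Qb Yd"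
    if \<mu>: "\<mu> \<in> P" for \<mu>
  proof -
    obtain v where "v \<in> Yd" "galerkin_sol (affine_op \<theta>b Bq Qb \<mu>) (affine_fun \<theta>f fq Qf \<mu>) Yd = affine_op \<theta>b Bq Qb \<mu> v"
      using theI'[OF unique[OF \<mu>]] unfolding galerkin_sol_def is_galerkin_sol_def by blast
    then show ?thesis
      using Bq_bounded Yd_subspace by (auto intro!: affine_op_mem_Xhat bounded_linear.linear)
  qed
  ultimately show ?thesis using unique by blast
qed

end
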